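(* Let $f_0\in\mathbb{C}[z]$ be a polynomial of length $\ell$ with nonzero constant coefficient, let $t$ be an element of the group $G_\ell=\langle n,h,r\rangle$ of permutations of $P_\ell$, and let $a_0=t(f_0)$. Let $f_0,f_1,\ldots$ and $a_0,a_1,\ldots$ be sequences of Rudin–Shapiro-like polynomials generated from $f_0$ and $a_0$, i.e., $f_{m+1}(z)=f_m(z)+\sigma_m z^{\operatorname{len} f_m}f_m^\dagger(-z)$ and $a_{m+1}(z)=a_m(z)+\sigma'_m z^{\operatorname{len} a_m}a_m^\dagger(-z)$ for some sign sequences $(\sigma_m),(\sigma'_m)$ in $\{-1,1\}$. Then $\lim_{m\to\infty}\mathrm{ADF}(a_m)=\lim_{m\to\infty}\mathrm{ADF}(f_m)$.
   Context: For a polynomial $a(z)=a_0+\cdots+a_dz^d$ of degree $d$, $\operatorname{len}a=1+d$ and $a^\dagger(z)=\overline{a_d}+\overline{a_{d-1}}z+\cdots+\overline{a_0}z^d$; $a^\dagger(-z)$ means $a^\dagger$ evaluated at $-z$; $\widetilde{a}(z)=a(-z)$. $P_\ell$ is the set of polynomials of length $\ell$ in $\mathbb{C}[z]$ with nonzero constant coefficient, and $G_\ell$ is the group of permutations of $P_\ell$ generated by $n(f)=-f$, $h(f)=\widetilde{f}$, $r(f)=f^\dagger$. Polynomials are identified with their coefficient sequences; for a sequence $f$, with $C_{f,f}(s)=\sum_jf_{j+s}\overline{f_j}$, the autocorrelation demerit factor is $\mathrm{ADF}(f)=\sum_{s\ne0}|C_{f,f}(s)|^2/|C_{f,f}(0)|^2$,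 which equals $\|f\|_4^4/\|f\|_2^4-1$ with $\|f\|_p=\left(\frac{1}{2\pi}\int_0^{2\pi}|f(e^{i\theta})|^pd\theta\right)^{1/p}$. *)

theory Defs
  imports "HOL-Computational_Algebra.Polynomial" Complex_Main
begin

definition plen :: "complex poly \<Rightarrow> nat" where
  "plen a = degree a + 1"

definition Pset :: "nat \<Rightarrow> complex poly set" where
  "Pset l = {f. plen f = l \<and> coeff f 0 \<noteq> 0}"

definition dagger :: "complex poly \<Rightarrow> complex poly" where
  "dagger a = map_poly cnj (reflect_poly a)"

definition negvar :: "complex poly \<Rightarrow> complex poly" where
  "negvar a = pcompose a [:0, -1:]"

definition gen_n :: "complex poly \<Rightarrow> complex poly" where "gen_n f = - f"
definition gen_h :: "complex poly \<Rightarrow> complex poly" where "gen_h f = negvar f"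
definition gen_r :: "complex poly \<Rightarrow> complex poly" where "gen_r f = dagger f"

text \<open>The group generated by n, h, r (each is an involution on P_l, so the
  monoid generated under composition is the group).\<close>
inductive_set Ggroup :: "(complex poly \<Rightarrow> complex poly) set" where
  G_id: "id \<in> Ggroup"
| G_n: "t \<in> Ggroup \<Longrightarrow> gen_n \<circ> t \<in> Ggroup"
| G_h: "t \<in> Ggroup \<Longrightarrow> gen_h \<circ> t \<in> Ggroup"
| G_r: "t \<in> Ggroup \<Longrightarrow> gen_r \<circ> t \<in> Ggroup"

definition rs_step :: "complex \<Rightarrow> complex poly \<Rightarrow> complex poly" where
  "rs_step \<sigma> f = f + smult \<sigma> (monom 1 (plen f) * negvar (dagger f))"

definition is_RS_like_seq :: "(nat \<Rightarrow> complex poly) \<Rightarrow> bool" where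
  "is_RS_like_seq F \<longleftrightarrow> (\<exists>\<sigma> :: nat \<Rightarrow> complex. (\<forall>m. \<sigma> m \<in> {-1, 1}) \<and>
      (\<forall>m. F (Suc m) = rs_step (\<sigma> m) (F m)))"

definition icoeff :: "complex poly \<Rightarrow> int \<Rightarrow> complex" where
  "icoeff f k = (if k < 0 then 0 else coeff f (nat k))"

definition acorr :: "complex poly \<Rightarrow> int \<Rightarrow> complex" where
  "acorr f s = (\<Sum>j\<in>{0..<int (plen f)}. icoeff f (j + s) * cnj (icoeff f j))"

text \<open>Autocorrelation demerit factor (the sum over s \<noteq> 0 is finite since
  C(s) = 0 for |s| \<ge> len f).\<close>
definition ADF :: "complex poly \<Rightarrow> real" where
  "ADF f = (\<Sum>s\<in>{-(int (plen f) - 1)..int (plen f) - 1} - {0}. (cmod (acorr f s))\<^sup>2)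
             / (cmod (acorr f 0))\<^sup>2"

end

theory Submission
  imports Defs "HOL-Analysis.Analysis"
begin

text \<open>
  Let \<open>N\<close>, \<open>A\<close>, \<open>B\<close> be the means over the unit circle of \<open>|f|\<^sup>2\<close>, \<open>|f|\<^sup>4\<close> and
  \<open>|f(z) f(-z)|\<^sup>2\<close> (\<open>norm2_sq\<close>, \<open>norm4_pow4\<close>, \<open>mixed_moment\<close>). On the circle one
  Rudin--Shapiro-like step \<open>f' = rs_step \<sigma> f\<close> satisfies
  \<open>|f'(\<plusminus>z)|\<^sup>2 = |f(z)|\<^sup>2 + |f(-z)|\<^sup>2 \<plusminus> 2\<sigma> Re W(z)\<close> with
  \<open>W(z) = (-1)\<^sup>d z\<^bsup>2d+1\<^esup> conj (f(z) f(-z))\<close> (\<open>rs_cross\<close>), \<open>d = degree f\<close>.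
  Since \<open>f(z) f(-z)\<close> has degree at most \<open>2d\<close>, \<open>W\<close> and \<open>W\<^sup>2\<close> have mean zero, and \<open>W\<close> is odd,
  hence orthogonal to the even function \<open>|f(z)|\<^sup>2 + |f(-z)|\<^sup>2\<close>. This gives
  \<open>N' = 2N\<close>, \<open>A' = 2A + 4B\<close>, \<open>B' = 2A\<close>, so \<open>A\<^sub>m/4\<^sup>m \<longrightarrow> 2(A\<^sub>0 + B\<^sub>0)/3\<close> while
  \<open>N\<^sub>m = 2\<^sup>m N\<^sub>0\<close>. By Parseval \<open>ADF f = A/N\<^sup>2 - 1\<close>, so the limit of the ADF depends only on
  \<open>(N, A, B)\<close> of the seed, and \<open>n\<close>, \<open>h\<close>, \<open>r\<close> preserve these.
\<close>

definition has_circle_mean :: "(complex \<Rightarrow> complex) \<Rightarrow> complex \<Rightarrow> bool" where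
  "has_circle_mean \<phi> v \<longleftrightarrow> ((\<lambda>\<theta>. \<phi> (cis \<theta>)) has_integral (of_real (2*pi) * v)) {0..2*pi}"

definition circle_mean :: "(complex \<Rightarrow> complex) \<Rightarrow> complex" where
  "circle_mean \<phi> = integral {0..2*pi} (\<lambda>\<theta>. \<phi> (cis \<theta>)) / of_real (2*pi)"

lemma has_circle_mean_add:
  "has_circle_mean \<phi> a \<Longrightarrow> has_circle_mean \<psi> b \<Longrightarrow> has_circle_mean (\<lambda>z. \<phi> z + \<psi> z) (a + b)"
  unfolding has_circle_mean_def distrib_left by (rule has_integral_add)

lemma has_circle_mean_diff:
  "has_circle_mean \<phi> a \<Longrightarrow> has_circle_mean \<psi> b \<Longrightarrow> has_circle_mean (\<lambda>z. \<phi> z - \<psi> z) (a - b)"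
  unfolding has_circle_mean_def right_diff_distrib by (rule has_integral_diff)

lemma has_circle_mean_uminus: "has_circle_mean \<phi> a \<Longrightarrow> has_circle_mean (\<lambda>z. - \<phi> z) (- a)"
  unfolding has_circle_mean_def mult_minus_right by (rule has_integral_neg)

lemma has_circle_mean_cmult: "has_circle_mean \<phi> a \<Longrightarrow> has_circle_mean (\<lambda>z. c * \<phi> z) (c * a)"
  unfolding has_circle_mean_def mult.left_commute[of "of_real (2*pi)" c a]
  by (rule has_integral_mult_right)

lemma has_circle_mean_cnj:
  assumes "has_circle_mean \<phi> a"
  shows "has_circle_mean (\<lambda>z. cnj (\<phi> z)) (cnj a)"
proof -
  have "((cnj \<circ> (\<lambda>\<theta>. \<phi> (cis \<theta>))) has_integral cnj (of_real (2*pi) * a)) {0..2*pi}"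
    using assms unfolding has_circle_mean_def has_integral_cnj .
  then show ?thesis
    unfolding has_circle_mean_def o_def by simp
qed

lemma has_circle_mean_cong:
  "has_circle_mean \<phi> a \<Longrightarrow> (\<And>z. cmod z = 1 \<Longrightarrow> \<phi> z = \<psi> z) \<Longrightarrow> has_circle_mean \<psi> a"
  unfolding has_circle_mean_def by (rule has_integral_eq[of _ "\<lambda>\<theta>. \<phi> (cis \<theta>)"]) auto

lemma has_circle_mean_unique: "has_circle_mean \<phi> a \<Longrightarrow> has_circle_mean \<phi> b \<Longrightarrow> a = b"
  unfolding has_circle_mean_def by (drule (1) has_integral_unique) simp

lemma circle_mean_eqI: "has_circle_mean \<phi> a \<Longrightarrow> circle_mean \<phi> = a"
  unfolding has_circle_mean_def circle_mean_def by (drule integral_unique) simp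

lemma has_circle_mean_circle_mean:
  assumes "continuous_on UNIV \<phi>"
  shows "has_circle_mean \<phi> (circle_mean \<phi>)"
proof -
  have "continuous_on {0..2*pi} (\<lambda>\<theta>. \<phi> (cis \<theta>))"
    by (rule continuous_on_compose2[OF assms]) (auto intro: continuous_intros)
  then have "(\<lambda>\<theta>. \<phi> (cis \<theta>)) integrable_on {0..2*pi}"
    by (rule integrable_continuous_interval)
  then show ?thesis
    unfolding has_circle_mean_def circle_mean_def by (simp add: has_integral_integral)
qed

lemma has_circle_mean_sum:
  "finite I \<Longrightarrow> (\<And>i. i \<in> I \<Longrightarrow> has_circle_mean (\<phi> i) (v i)) \<Longrightarrow>
    has_circle_mean (\<lambda>z. \<Sum>i\<in>I. \<phi> i z) (\<Sum>i\<in>I. v i)"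
  unfolding has_circle_mean_def sum_distrib_left by (rule has_integral_sum)

lemma has_integral_cis_int:
  "((\<lambda>\<theta>. cis (of_int k * \<theta>)) has_integral (if k = 0 then of_real (2*pi) else 0)) {0..2*pi}"
proof (cases "k = 0")
  case True
  then show ?thesis
    using has_integral_const_real[of "1::complex" 0 "2*pi"] by (simp add: scaleR_conv_of_real)
next
  case False
  define F where "F = (\<lambda>\<theta>::real. exp (\<i> * of_int k * of_real \<theta>) / (\<i> * of_int k))"
  have "((\<lambda>\<theta>. cis (of_int k * \<theta>)) has_integral (F (2*pi) - F 0)) {0..2*pi}"
  proof (rule fundamental_theorem_of_calculus)
    fix x :: real
    have "((\<lambda>z. exp (\<i> * of_int k * z) / (\<i> * of_int k)) has_field_derivative
            exp (\<i> * of_int k * of_real x) * (\<i> * of_int k * 1) / (\<i> * of_int k))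
          (at (of_real x))"
      by (intro DERIV_cdivide DERIV_fun_exp DERIV_cmult DERIV_ident)
    then have "(F has_vector_derivative exp (\<i> * of_int k * of_real x)) (at x within {0..2*pi})"
      unfolding F_def using False by (intro has_vector_derivative_real_field) simp
    then show "(F has_vector_derivative cis (of_int k * x)) (at x within {0..2*pi})"
      by (simp add: cis_conv_exp mult_ac)
  qed simp
  moreover have "exp (\<i> * of_int k * of_real (2*pi)) = 1"
    using cis_multiple_2pi[of "of_int k"] by (simp add: cis_conv_exp mult_ac)
  ultimately show ?thesis
    using False by (simp add: F_def)
qed

lemma has_circle_mean_power_int: "has_circle_mean (\<lambda>z. z powi k) (if k = 0 then 1 else 0)"
  unfolding has_circle_mean_def cis_power_int using has_integral_cis_int[of k] by auto

text \<open>The rotation \<open>z \<mapsto> -z\<close> is the shift \<open>\<theta> \<mapsto> \<theta> + \<pi>\<close>; split \<open>[0, 2\<pi>]\<close> at \<open>\<pi>\<close> and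
  swap the halves using \<open>2\<pi>\<close>-periodicity.\<close>
lemma has_circle_mean_reflect:
  assumes "has_circle_mean \<phi> a"
  shows "has_circle_mean (\<lambda>z. \<phi> (- z)) a"
proof -
  define \<psi> where "\<psi> = (\<lambda>\<theta>. \<phi> (cis \<theta>))"
  have periodic: "\<psi> (x + 2*pi) = \<psi> x" for x
    unfolding \<psi>_def by (simp add: cis.ctr complex_eq_iff)
  have shift: "\<phi> (- cis x) = \<psi> (x + pi)" for x
  proof -
    have "- cis x = cis (x + pi)" by (simp add: cis.ctr complex_eq_iff)
    then show ?thesis unfolding \<psi>_def by simp
  qed
  have whole: "(\<psi> has_integral (of_real (2*pi) * a)) {0..2*pi}"
    using assms unfolding has_circle_mean_def \<psi>_def .
  then have "\<psi> integrable_on {0..pi}" "\<psi> integrable_on {pi..2*pi}"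
    by (auto intro: integrable_subinterval_real)
  then obtain I1 I2 where h1: "(\<psi> has_integral I1) {0..pi}" and h2: "(\<psi> has_integral I2) {pi..2*pi}"
    by blast
  have "(\<psi> has_integral (I1 + I2)) {0..2*pi}"
    by (rule has_integral_combine[OF _ _ h1 h2]) auto
  then have sum: "I1 + I2 = of_real (2*pi) * a"
    using whole by (rule has_integral_unique)
  have g1: "((\<lambda>x. \<psi> (x + pi)) has_integral I2) {0..pi}"
    using has_integral_shift_real_ivl[OF h2, of pi] by simp
  have "((\<lambda>x. \<psi> (x + - pi)) has_integral I1) {pi..2*pi}"
    using has_integral_shift_real_ivl[OF h1, of "-pi"] by simp
  then have g2: "((\<lambda>x. \<psi> (x + pi)) has_integral I1) {pi..2*pi}"
  proof (rule has_integral_eq[rotated])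
    fix x show "\<psi> (x + - pi) = \<psi> (x + pi)" using periodic[of "x - pi"] by (simp add: add.commute)
  qed
  have "((\<lambda>x. \<psi> (x + pi)) has_integral (I2 + I1)) {0..2*pi}"
    by (rule has_integral_combine[OF _ _ g1 g2]) auto
  then show ?thesis
    unfolding has_circle_mean_def using sum shift by (simp add: add.commute)
qed

lemma has_circle_mean_odd:
  assumes "continuous_on UNIV \<phi>" and "\<And>z. \<phi> (- z) = - \<phi> z"
  shows "has_circle_mean \<phi> 0"
proof -
  have mean: "has_circle_mean \<phi> (circle_mean \<phi>)"
    by (rule has_circle_mean_circle_mean[OF assms(1)])
  have "has_circle_mean (\<lambda>z. - \<phi> z) (circle_mean \<phi>)"
    using has_circle_mean_reflect[OF mean] unfolding assms(2) .
  then have "circle_mean \<phi> = - circle_mean \<phi>"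
    using has_circle_mean_uminus[OF mean] by (rule has_circle_mean_unique)
  with mean show ?thesis by simp
qed

lemma mult_cnj_unit: "cmod z = 1 \<Longrightarrow> z * cnj z = 1"
  using complex_norm_square[of z] by simp

lemma cnj_unit: "cmod z = 1 \<Longrightarrow> cnj z = inverse z"
  by (metis inverse_unique mult_cnj_unit)

lemma power_int_mult_cnj_unit:
  assumes "cmod z = 1"
  shows "z powi i * cnj (z powi j) = z powi (i - j)"
proof -
  have "z \<noteq> 0" using assms by auto
  then show ?thesis
    by (simp add: cnj_unit[OF assms] power_int_inverse power_int_diff divide_inverse)
qed

lemma has_circle_mean_power_mult_cnj_poly:
  assumes "degree p < n"
  shows "has_circle_mean (\<lambda>z. z ^ n * cnj (poly p z)) 0"
proof -
  have "has_circle_mean (\<lambda>z. \<Sum>i\<le>degree p. cnj (coeff p i) * z powi (int n - int i))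
          (\<Sum>i\<le>degree p. cnj (coeff p i) * 0)"
  proof (intro has_circle_mean_sum has_circle_mean_cmult)
    fix i assume "i \<in> {..degree p}"
    then show "has_circle_mean (\<lambda>z. z powi (int n - int i)) 0"
      using assms has_circle_mean_power_int[of "int n - int i"] by auto
  qed simp
  then have "has_circle_mean (\<lambda>z. \<Sum>i\<le>degree p. cnj (coeff p i) * z powi (int n - int i)) 0"
    by simp
  then show ?thesis
  proof (rule has_circle_mean_cong)
    fix z :: complex assume z: "cmod z = 1"
    show "(\<Sum>i\<le>degree p. cnj (coeff p i) * z powi (int n - int i)) = z ^ n * cnj (poly p z)"
    proof -
      have "z powi (int n - int i) = z ^ n * cnj (z ^ i)" for i
        using power_int_mult_cnj_unit[OF z, of "int n" "int i"] by simp
      then show ?thesis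
        unfolding poly_altdef cnj_sum sum_distrib_left
        by (intro sum.cong refl) (simp only: complex_cnj_mult complex_cnj_power mult.left_commute)
    qed
  qed
qed

lemma poly_negvar: "poly (negvar f) z = poly f (- z)"
  unfolding negvar_def by (simp add: poly_pcompose)

lemma degree_negvar: "degree (negvar f) = degree f"
  unfolding negvar_def by (simp add: degree_pcompose)

lemma poly_dagger_unit:
  assumes z: "cmod z = 1"
  shows "poly (dagger f) z = z ^ degree f * cnj (poly f z)"
proof -
  have "cnj z \<noteq> 0" using z by auto
  then have "poly (dagger f) z = cnj (cnj z ^ degree f * poly f (inverse (cnj z)))"
    unfolding dagger_def by (simp add: poly_reflect_poly_nz)
  also have "inverse (cnj z) = z"
    using cnj_unit[OF z] by simp
  finally show ?thesis by simp
qed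

lemma poly_rs_step_unit:
  assumes z: "cmod z = 1"
  shows "poly (rs_step \<sigma> f) z
           = poly f z + \<sigma> * (-1) ^ degree f * z ^ (2 * degree f + 1) * cnj (poly f (- z))"
proof -
  have "poly (rs_step \<sigma> f) z = poly f z + \<sigma> * (z ^ (degree f + 1) * poly (dagger f) (- z))"
    by (simp add: rs_step_def plen_def poly_monom poly_negvar)
  also have "poly (dagger f) (- z) = (-1) ^ degree f * z ^ degree f * cnj (poly f (- z))"
    using poly_dagger_unit[of "- z" f] z by (simp add: power_minus[of z])
  also have "z ^ (degree f + 1) * ((-1) ^ degree f * z ^ degree f * cnj (poly f (- z)))
               = (-1) ^ degree f * (z ^ (degree f + 1) * z ^ degree f) * cnj (poly f (- z))"
    by (simp only: mult_ac)
  also have "z ^ (degree f + 1) * z ^ degree f = z ^ (2 * degree f + 1)"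
    by (simp only: power_add[symmetric] mult_2 add_ac)
  finally show ?thesis by (simp add: mult_ac)
qed

definition sq_abs_poly :: "complex poly \<Rightarrow> complex \<Rightarrow> complex" where
  "sq_abs_poly f z = poly f z * cnj (poly f z)"

definition rs_cross :: "complex poly \<Rightarrow> complex \<Rightarrow> complex" where
  "rs_cross f z = (-1) ^ degree f * z ^ (2 * degree f + 1) * cnj (poly f z * poly f (- z))"

definition norm2_sq :: "complex poly \<Rightarrow> complex" where
  "norm2_sq f = circle_mean (sq_abs_poly f)"

definition norm4_pow4 :: "complex poly \<Rightarrow> complex" where
  "norm4_pow4 f = circle_mean (\<lambda>z. sq_abs_poly f z ^ 2)"

definition mixed_moment :: "complex poly \<Rightarrow> complex" where
  "mixed_moment f = circle_mean (\<lambda>z. sq_abs_poly f z * sq_abs_poly f (- z))"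

lemma cnj_sq_abs_poly [simp]: "cnj (sq_abs_poly f z) = sq_abs_poly f z"
  unfolding sq_abs_poly_def by simp

lemma continuous_on_sq_abs_poly: "continuous_on UNIV (sq_abs_poly f)"
  unfolding sq_abs_poly_def by (intro continuous_intros)

lemma continuous_on_sq_abs_poly_reflect: "continuous_on UNIV (\<lambda>z. sq_abs_poly f (- z))"
  unfolding sq_abs_poly_def by (intro continuous_intros)

lemma continuous_on_rs_cross: "continuous_on UNIV (rs_cross f)"
  unfolding rs_cross_def by (intro continuous_intros)

lemma has_circle_mean_norm2_sq: "has_circle_mean (sq_abs_poly f) (norm2_sq f)"
  unfolding norm2_sq_def by (rule has_circle_mean_circle_mean[OF continuous_on_sq_abs_poly])

lemma has_circle_mean_norm4_pow4: "has_circle_mean (\<lambda>z. sq_abs_poly f z ^ 2) (norm4_pow4 f)"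
  unfolding norm4_pow4_def
  by (intro has_circle_mean_circle_mean continuous_intros continuous_on_sq_abs_poly)

lemma has_circle_mean_mixed_moment:
  "has_circle_mean (\<lambda>z. sq_abs_poly f z * sq_abs_poly f (- z)) (mixed_moment f)"
  unfolding mixed_moment_def
  by (intro has_circle_mean_circle_mean continuous_intros continuous_on_sq_abs_poly
      continuous_on_sq_abs_poly_reflect)

lemma sign_cases:
  fixes e :: complex
  assumes "e \<in> {-1, 1}"
  shows "cnj e = e" "e * e = 1"
  using assms by auto

lemma sign_power: "(-1::complex) ^ n \<in> {-1, 1}"
  by (cases "even n") auto

lemma sq_abs_add_signed_cnj:
  fixes u v p \<sigma> e :: complex
  assumes "p * cnj p = 1" and "\<sigma> \<in> {-1, 1}" and "e \<in> {-1, 1}"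
  shows "(u + \<sigma> * e * p * cnj v) * cnj (u + \<sigma> * e * p * cnj v)
     = u * cnj u + v * cnj v + \<sigma> * (e * p * cnj (u * v) + cnj (e * p * cnj (u * v)))"
  using assms(1) sign_cases[OF assms(2)] sign_cases[OF assms(3)] by simp algebra

lemma power_odd_mult_cnj_unit:
  "cmod z = 1 \<Longrightarrow> z ^ (2 * n + 1) * cnj (z ^ (2 * n + 1)) = 1"
  by (rule mult_cnj_unit) (simp only: norm_power power_one)

lemma sq_abs_poly_rs_step:
  assumes z: "cmod z = 1" and \<sigma>: "\<sigma> \<in> {-1, 1}"
  shows "sq_abs_poly (rs_step \<sigma> f) z
           = sq_abs_poly f z + sq_abs_poly f (- z) + \<sigma> * (rs_cross f z + cnj (rs_cross f z))"
  unfolding sq_abs_poly_def rs_cross_def poly_rs_step_unit[OF z]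
  using sq_abs_add_signed_cnj[where u = "poly f z" and v = "poly f (- z)",
      OF power_odd_mult_cnj_unit[OF z, of "degree f"] \<sigma> sign_power[of "degree f"]]
  by (simp add: mult_ac)

lemma sq_abs_poly_rs_step_reflect:
  assumes z: "cmod z = 1" and \<sigma>: "\<sigma> \<in> {-1, 1}"
  shows "sq_abs_poly (rs_step \<sigma> f) (- z)
           = sq_abs_poly f z + sq_abs_poly f (- z) - \<sigma> * (rs_cross f z + cnj (rs_cross f z))"
proof -
  have "- \<sigma> \<in> {-1, 1}" using \<sigma> by auto
  moreover have "poly (rs_step \<sigma> f) (- z)
      = poly f (- z) + (- \<sigma>) * (-1) ^ degree f * z ^ (2 * degree f + 1) * cnj (poly f z)"
    using poly_rs_step_unit[of "- z"] z by simp
  ultimately show ?thesis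
    unfolding sq_abs_poly_def rs_cross_def
    using sq_abs_add_signed_cnj[where u = "poly f (- z)" and v = "poly f z" and \<sigma> = "- \<sigma>",
        OF power_odd_mult_cnj_unit[OF z, of "degree f"] _ sign_power[of "degree f"]]
    by (simp add: mult_ac)
qed

lemma rs_cross_reflect: "rs_cross f (- z) = - rs_cross f z"
  unfolding rs_cross_def by (simp add: power_minus[of z] mult_ac)

text \<open>Both \<open>W\<close> and \<open>W\<^sup>2\<close> are \<open>z\<^sup>n\<close> times the conjugate of a polynomial of degree \<open>< n\<close>.\<close>
lemma has_circle_mean_rs_cross: "has_circle_mean (rs_cross f) 0"
proof -
  have "degree (f * negvar f) < 2 * degree f + 1"
    using degree_mult_le[of f "negvar f"] by (simp add: degree_negvar)
  from has_circle_mean_cmult[OF has_circle_mean_power_mult_cnj_poly[OF this], of "(-1) ^ degree f"]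
  have "has_circle_mean
      (\<lambda>z. (-1) ^ degree f * (z ^ (2 * degree f + 1) * cnj (poly (f * negvar f) z))) 0"
    by simp
  then show ?thesis
    by (rule has_circle_mean_cong) (simp add: rs_cross_def poly_negvar mult_ac)
qed

lemma has_circle_mean_rs_cross_sq: "has_circle_mean (\<lambda>z. rs_cross f z ^ 2) 0"
proof -
  have "degree ((f * negvar f) ^ 2) < 2 * (2 * degree f + 1)"
    using degree_mult_le[of f "negvar f"] degree_power_le[of "f * negvar f" 2]
    by (simp add: degree_negvar)
  then show ?thesis
  proof (rule has_circle_mean_power_mult_cnj_poly[THEN has_circle_mean_cong])
    fix z :: complex
    have e: "((-1::complex) ^ degree f) ^ 2 = 1"
      using sign_cases(2)[OF sign_power] by (simp add: power2_eq_square)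
    have "rs_cross f z ^ 2
        = ((-1::complex) ^ degree f) ^ 2 * (z ^ (2 * degree f + 1)) ^ 2
            * cnj (poly f z * poly f (- z)) ^ 2"
      unfolding rs_cross_def power_mult_distrib ..
    also have "\<dots> = z ^ (2 * (2 * degree f + 1)) * cnj (poly ((f * negvar f) ^ 2) z)"
      unfolding e by (simp only: power_mult[symmetric] poly_power poly_mult poly_negvar
          complex_cnj_power mult_1 mult.commute)
    finally show "z ^ (2 * (2 * degree f + 1)) * cnj (poly ((f * negvar f) ^ 2) z) = rs_cross f z ^ 2"
      by simp
  qed
qed

lemma has_circle_mean_cnj_rs_cross: "has_circle_mean (\<lambda>z. cnj (rs_cross f z)) 0"
  using has_circle_mean_cnj[OF has_circle_mean_rs_cross] by simp

lemma has_circle_mean_cnj_rs_cross_sq: "has_circle_mean (\<lambda>z. cnj (rs_cross f z) ^ 2) 0"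
  using has_circle_mean_cnj[OF has_circle_mean_rs_cross_sq] by simp

lemma has_circle_mean_sq_abs_rs_cross:
  "has_circle_mean (\<lambda>z. rs_cross f z * cnj (rs_cross f z)) (mixed_moment f)"
proof (rule has_circle_mean_cong[OF has_circle_mean_mixed_moment])
  fix z :: complex assume z: "cmod z = 1"
  define e where "e = (-1::complex) ^ degree f"
  define p where "p = z ^ (2 * degree f + 1)"
  have "p * cnj p = 1"
    unfolding p_def by (rule power_odd_mult_cnj_unit[OF z])
  moreover have "cnj e = e" "e * e = 1"
    unfolding e_def by (rule sign_cases[OF sign_power])+
  moreover have "rs_cross f z = e * p * cnj (poly f z * poly f (- z))"
    unfolding rs_cross_def e_def p_def ..
  ultimately show "sq_abs_poly f z * sq_abs_poly f (- z) = rs_cross f z * cnj (rs_cross f z)"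
    unfolding sq_abs_poly_def by simp algebra
qed

lemma has_circle_mean_even_times_rs_cross:
  "has_circle_mean (\<lambda>z. (sq_abs_poly f z + sq_abs_poly f (- z)) * rs_cross f z) 0"
proof (rule has_circle_mean_odd)
  show "continuous_on UNIV (\<lambda>z. (sq_abs_poly f z + sq_abs_poly f (- z)) * rs_cross f z)"
    by (intro continuous_intros continuous_on_sq_abs_poly continuous_on_sq_abs_poly_reflect
        continuous_on_rs_cross)
qed (simp add: rs_cross_reflect)

lemma has_circle_mean_even_times_cnj_rs_cross:
  "has_circle_mean (\<lambda>z. (sq_abs_poly f z + sq_abs_poly f (- z)) * cnj (rs_cross f z)) 0"
  using has_circle_mean_cnj[OF has_circle_mean_even_times_rs_cross] by simp

lemma norm2_sq_rs_step:
  assumes "\<sigma> \<in> {-1, 1}"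
  shows "norm2_sq (rs_step \<sigma> f) = 2 * norm2_sq f"
proof -
  have "has_circle_mean (\<lambda>z. sq_abs_poly f z + sq_abs_poly f (- z)
          + \<sigma> * (rs_cross f z + cnj (rs_cross f z))) (norm2_sq f + norm2_sq f + \<sigma> * (0 + 0))"
    by (intro has_circle_mean_add has_circle_mean_cmult has_circle_mean_norm2_sq
        has_circle_mean_reflect has_circle_mean_rs_cross has_circle_mean_cnj_rs_cross)
  then have "has_circle_mean (sq_abs_poly (rs_step \<sigma> f)) (norm2_sq f + norm2_sq f + \<sigma> * (0 + 0))"
    by (rule has_circle_mean_cong) (simp add: sq_abs_poly_rs_step[OF _ assms])
  then show ?thesis
    unfolding norm2_sq_def[of "rs_step \<sigma> f"] by (simp add: circle_mean_eqI)
qed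

lemma norm4_pow4_rs_step:
  assumes \<sigma>: "\<sigma> \<in> {-1, 1}"
  shows "norm4_pow4 (rs_step \<sigma> f) = 2 * norm4_pow4 f + 4 * mixed_moment f"
proof -
  let ?u = "sq_abs_poly f" and ?W = "rs_cross f"
  have "has_circle_mean (\<lambda>z. ?u z ^ 2 + ?u (- z) ^ 2 + 2 * (?u z * ?u (- z))
     + (2 * \<sigma>) * ((?u z + ?u (- z)) * ?W z) + (2 * \<sigma>) * ((?u z + ?u (- z)) * cnj (?W z))
     + ?W z ^ 2 + cnj (?W z) ^ 2 + 2 * (?W z * cnj (?W z)))
     (norm4_pow4 f + norm4_pow4 f + 2 * mixed_moment f + (2 * \<sigma>) * 0 + (2 * \<sigma>) * 0
       + 0 + 0 + 2 * mixed_moment f)"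
    by (intro has_circle_mean_add has_circle_mean_cmult has_circle_mean_norm4_pow4
        has_circle_mean_reflect has_circle_mean_mixed_moment has_circle_mean_even_times_rs_cross
        has_circle_mean_even_times_cnj_rs_cross has_circle_mean_rs_cross_sq
        has_circle_mean_cnj_rs_cross_sq has_circle_mean_sq_abs_rs_cross)
  then have "has_circle_mean (\<lambda>z. sq_abs_poly (rs_step \<sigma> f) z ^ 2)
     (norm4_pow4 f + norm4_pow4 f + 2 * mixed_moment f + (2 * \<sigma>) * 0 + (2 * \<sigma>) * 0
       + 0 + 0 + 2 * mixed_moment f)"
  proof (rule has_circle_mean_cong)
    fix z :: complex assume z: "cmod z = 1"
    show "?u z ^ 2 + ?u (- z) ^ 2 + 2 * (?u z * ?u (- z))
     + (2 * \<sigma>) * ((?u z + ?u (- z)) * ?W z) + (2 * \<sigma>) * ((?u z + ?u (- z)) * cnj (?W z))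
     + ?W z ^ 2 + cnj (?W z) ^ 2 + 2 * (?W z * cnj (?W z)) = sq_abs_poly (rs_step \<sigma> f) z ^ 2"
      unfolding sq_abs_poly_rs_step[OF z \<sigma>] using sign_cases(2)[OF \<sigma>] by algebra
  qed
  then show ?thesis
    unfolding norm4_pow4_def[of "rs_step \<sigma> f"] by (simp add: circle_mean_eqI)
qed

lemma mixed_moment_rs_step:
  assumes \<sigma>: "\<sigma> \<in> {-1, 1}"
  shows "mixed_moment (rs_step \<sigma> f) = 2 * norm4_pow4 f"
proof -
  let ?u = "sq_abs_poly f" and ?W = "rs_cross f"
  have "has_circle_mean (\<lambda>z. ?u z ^ 2 + ?u (- z) ^ 2 + 2 * (?u z * ?u (- z))
     - ?W z ^ 2 - cnj (?W z) ^ 2 - 2 * (?W z * cnj (?W z)))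
     (norm4_pow4 f + norm4_pow4 f + 2 * mixed_moment f - 0 - 0 - 2 * mixed_moment f)"
    by (intro has_circle_mean_add has_circle_mean_diff has_circle_mean_cmult
        has_circle_mean_norm4_pow4 has_circle_mean_reflect has_circle_mean_mixed_moment
        has_circle_mean_rs_cross_sq has_circle_mean_cnj_rs_cross_sq has_circle_mean_sq_abs_rs_cross)
  then have "has_circle_mean (\<lambda>z. sq_abs_poly (rs_step \<sigma> f) z * sq_abs_poly (rs_step \<sigma> f) (- z))
     (norm4_pow4 f + norm4_pow4 f + 2 * mixed_moment f - 0 - 0 - 2 * mixed_moment f)"
  proof (rule has_circle_mean_cong)
    fix z :: complex assume z: "cmod z = 1"
    show "?u z ^ 2 + ?u (- z) ^ 2 + 2 * (?u z * ?u (- z))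
     - ?W z ^ 2 - cnj (?W z) ^ 2 - 2 * (?W z * cnj (?W z))
       = sq_abs_poly (rs_step \<sigma> f) z * sq_abs_poly (rs_step \<sigma> f) (- z)"
      unfolding sq_abs_poly_rs_step[OF z \<sigma>] sq_abs_poly_rs_step_reflect[OF z \<sigma>]
      using sign_cases(2)[OF \<sigma>] by algebra
  qed
  then show ?thesis
    unfolding mixed_moment_def[of "rs_step \<sigma> f"] by (simp add: circle_mean_eqI)
qed

lemma icoeff_eq_0: "i \<notin> {0..int (degree f)} \<Longrightarrow> icoeff f i = 0"
  unfolding icoeff_def by (auto simp: coeff_eq_0)

lemma poly_eq_sum_icoeff: "poly f z = (\<Sum>i\<in>{0..int (degree f)}. icoeff f i * z powi i)"
proof -
  have "{0..int (degree f)} = int ` {0..degree f}"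
    by (simp add: image_int_atLeastAtMost)
  then have "(\<Sum>i\<in>{0..int (degree f)}. icoeff f i * z powi i)
      = (\<Sum>i\<in>{0..degree f}. icoeff f (int i) * z powi (int i))"
    by (simp add: sum.reindex)
  also have "\<dots> = (\<Sum>i\<le>degree f. coeff f i * z ^ i)"
    by (rule sum.cong) (auto simp: icoeff_def)
  finally show ?thesis by (simp add: poly_altdef)
qed

lemma sum_icoeff_shift:
  assumes "j \<in> {0..int (degree f)}"
  shows "(\<Sum>s\<in>{- int (degree f)..int (degree f)}. icoeff f (j + s) * z powi s)
       = (\<Sum>i\<in>{0..int (degree f)}. icoeff f i * z powi (i - j))"
proof -
  let ?d = "int (degree f)"
  have "(\<Sum>s\<in>{- ?d..?d}. icoeff f (j + s) * z powi s)
      = (\<Sum>i\<in>plus j ` {- ?d..?d}. icoeff f i * z powi (i - j))"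
    by (subst sum.reindex) (auto simp: inj_on_def)
  also have "plus j ` {- ?d..?d} = {- ?d + j..?d + j}" by simp
  also have "(\<Sum>i\<in>{- ?d + j..?d + j}. icoeff f i * z powi (i - j))
      = (\<Sum>i\<in>{0..?d}. icoeff f i * z powi (i - j))"
    by (rule sum.mono_neutral_right) (use assms in \<open>auto simp: icoeff_eq_0\<close>)
  finally show ?thesis .
qed

lemma sq_abs_poly_eq_acorr_sum:
  assumes z: "cmod z = 1"
  shows "sq_abs_poly f z = (\<Sum>s\<in>{-(int (plen f) - 1)..int (plen f) - 1}. acorr f s * z powi s)"
proof -
  let ?d = "int (degree f)"
  have "(\<Sum>s\<in>{- ?d..?d}. acorr f s * z powi s)
      = (\<Sum>s\<in>{- ?d..?d}. \<Sum>j\<in>{0..?d}. cnj (icoeff f j) * (icoeff f (j + s) * z powi s))"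
    unfolding acorr_def plen_def sum_distrib_right by (intro sum.cong) (auto simp: mult_ac)
  also have "\<dots> = (\<Sum>j\<in>{0..?d}. cnj (icoeff f j) * (\<Sum>s\<in>{- ?d..?d}. icoeff f (j + s) * z powi s))"
    by (subst sum.swap) (simp add: sum_distrib_left)
  also have "\<dots> = (\<Sum>j\<in>{0..?d}. cnj (icoeff f j) * (\<Sum>i\<in>{0..?d}. icoeff f i * z powi (i - j)))"
    by (intro sum.cong refl) (simp add: sum_icoeff_shift)
  also have "\<dots> = (\<Sum>i\<in>{0..?d}. icoeff f i * cnj (\<Sum>j\<in>{0..?d}. icoeff f j * z powi j) * z powi i)"
    unfolding cnj_sum sum_distrib_left sum_distrib_right
    by (subst sum.swap) (intro sum.cong refl;
        simp add: power_int_mult_cnj_unit[OF z, symmetric] mult_ac)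
  also have "\<dots> = sq_abs_poly f z"
    unfolding sq_abs_poly_def poly_eq_sum_icoeff[of f z] sum_distrib_right by (simp add: mult_ac)
  finally show ?thesis
    unfolding plen_def by simp
qed

lemma norm2_sq_eq_acorr: "norm2_sq f = acorr f 0"
proof -
  let ?D = "{-(int (plen f) - 1)..int (plen f) - 1}"
  have "has_circle_mean (\<lambda>z. \<Sum>s\<in>?D. acorr f s * z powi s)
          (\<Sum>s\<in>?D. acorr f s * (if s = 0 then 1 else 0))"
    by (intro has_circle_mean_sum has_circle_mean_cmult has_circle_mean_power_int) simp
  then have "has_circle_mean (sq_abs_poly f) (\<Sum>s\<in>?D. acorr f s * (if s = 0 then 1 else 0))"
    by (rule has_circle_mean_cong) (simp add: sq_abs_poly_eq_acorr_sum)
  moreover have "0 \<in> ?D" unfolding plen_def by simp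
  ultimately show ?thesis
    unfolding norm2_sq_def by (simp add: circle_mean_eqI if_distrib cong: if_cong)
qed

lemma norm4_pow4_eq_sum_acorr:
  "norm4_pow4 f = of_real (\<Sum>s\<in>{-(int (plen f) - 1)..int (plen f) - 1}. (cmod (acorr f s))\<^sup>2)"
proof -
  let ?D = "{-(int (plen f) - 1)..int (plen f) - 1}"
  let ?C = "acorr f"
  have "has_circle_mean (\<lambda>z. \<Sum>s\<in>?D. \<Sum>t\<in>?D. (?C s * cnj (?C t)) * z powi (s - t))
          (\<Sum>s\<in>?D. \<Sum>t\<in>?D. (?C s * cnj (?C t)) * (if s - t = 0 then 1 else 0))"
    by (intro has_circle_mean_sum has_circle_mean_cmult has_circle_mean_power_int) simp_all
  moreover have "(\<Sum>s\<in>?D. \<Sum>t\<in>?D. (?C s * cnj (?C t)) * z powi (s - t)) = sq_abs_poly f z ^ 2"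
    if z: "cmod z = 1" for z
  proof -
    have "sq_abs_poly f z ^ 2 = sq_abs_poly f z * cnj (sq_abs_poly f z)"
      by (simp add: power2_eq_square)
    also have "\<dots> = (\<Sum>s\<in>?D. \<Sum>t\<in>?D. (?C s * cnj (?C t)) * (z powi s * cnj (z powi t)))"
      unfolding sq_abs_poly_eq_acorr_sum[OF z] cnj_sum sum_product complex_cnj_mult
      by (simp add: mult_ac)
    also have "\<dots> = (\<Sum>s\<in>?D. \<Sum>t\<in>?D. (?C s * cnj (?C t)) * z powi (s - t))"
      by (simp only: power_int_mult_cnj_unit[OF z])
    finally show ?thesis ..
  qed
  ultimately have "has_circle_mean (\<lambda>z. sq_abs_poly f z ^ 2)
      (\<Sum>s\<in>?D. \<Sum>t\<in>?D. (?C s * cnj (?C t)) * (if s - t = 0 then 1 else 0))"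
    by (rule has_circle_mean_cong)
  then have "norm4_pow4 f = (\<Sum>s\<in>?D. ?C s * cnj (?C s))"
    unfolding norm4_pow4_def by (simp add: circle_mean_eqI if_distrib cong: if_cong)
  also have "\<dots> = of_real (\<Sum>s\<in>?D. (cmod (?C s))\<^sup>2)"
    unfolding of_real_sum by (intro sum.cong refl) (rule complex_norm_square[symmetric])
  finally show ?thesis .
qed

lemma ADF_eq_moments:
  "ADF f = (Re (norm4_pow4 f) - (cmod (norm2_sq f))\<^sup>2) / (cmod (norm2_sq f))\<^sup>2"
proof -
  let ?D = "{-(int (plen f) - 1)..int (plen f) - 1}"
  have "0 \<in> ?D" unfolding plen_def by simp
  then show ?thesis
    unfolding ADF_def norm4_pow4_eq_sum_acorr norm2_sq_eq_acorr by (simp add: sum_diff1)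
qed

definition moments :: "complex poly \<Rightarrow> complex \<times> complex \<times> complex" where
  "moments f = (norm2_sq f, norm4_pow4 f, mixed_moment f)"

lemma moments_gen_n: "moments (gen_n f) = moments f"
proof -
  have "sq_abs_poly (gen_n f) = sq_abs_poly f"
    by (rule ext) (simp add: sq_abs_poly_def gen_n_def)
  then show ?thesis
    unfolding moments_def norm2_sq_def norm4_pow4_def mixed_moment_def by simp
qed

lemma moments_gen_h: "moments (gen_h f) = moments f"
proof -
  have u: "sq_abs_poly (gen_h f) z = sq_abs_poly f (- z)" for z
    by (simp add: sq_abs_poly_def gen_h_def poly_negvar)
  have "has_circle_mean (sq_abs_poly (gen_h f)) (norm2_sq f)"
    by (rule has_circle_mean_cong[OF has_circle_mean_reflect[OF has_circle_mean_norm2_sq]])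
      (simp add: u)
  moreover have "has_circle_mean (\<lambda>z. sq_abs_poly (gen_h f) z ^ 2) (norm4_pow4 f)"
    by (rule has_circle_mean_cong[OF has_circle_mean_reflect[OF has_circle_mean_norm4_pow4]])
      (simp add: u)
  moreover have "has_circle_mean (\<lambda>z. sq_abs_poly (gen_h f) z * sq_abs_poly (gen_h f) (- z))
      (mixed_moment f)"
    by (rule has_circle_mean_cong[OF has_circle_mean_reflect[OF has_circle_mean_mixed_moment]])
      (simp add: u mult.commute)
  ultimately show ?thesis
    unfolding moments_def norm2_sq_def norm4_pow4_def mixed_moment_def by (simp add: circle_mean_eqI)
qed

lemma sq_abs_poly_dagger:
  assumes z: "cmod z = 1"
  shows "sq_abs_poly (dagger f) z = sq_abs_poly f z"
proof -
  define q where "q = z ^ degree f"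
  have "q * cnj q = 1"
    unfolding q_def by (rule mult_cnj_unit) (simp add: norm_power z)
  then show ?thesis
    unfolding sq_abs_poly_def poly_dagger_unit[OF z] complex_cnj_mult complex_cnj_cnj q_def[symmetric]
    by algebra
qed

lemma moments_gen_r: "moments (gen_r f) = moments f"
proof -
  have "has_circle_mean (sq_abs_poly (gen_r f)) (norm2_sq f)"
    by (rule has_circle_mean_cong[OF has_circle_mean_norm2_sq]) (simp add: gen_r_def sq_abs_poly_dagger)
  moreover have "has_circle_mean (\<lambda>z. sq_abs_poly (gen_r f) z ^ 2) (norm4_pow4 f)"
    by (rule has_circle_mean_cong[OF has_circle_mean_norm4_pow4]) (simp add: gen_r_def sq_abs_poly_dagger)
  moreover have "has_circle_mean (\<lambda>z. sq_abs_poly (gen_r f) z * sq_abs_poly (gen_r f) (- z))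
      (mixed_moment f)"
    by (rule has_circle_mean_cong[OF has_circle_mean_mixed_moment]) (simp add: gen_r_def sq_abs_poly_dagger)
  ultimately show ?thesis
    unfolding moments_def norm2_sq_def norm4_pow4_def mixed_moment_def by (simp add: circle_mean_eqI)
qed

lemma moments_Ggroup: "t \<in> Ggroup \<Longrightarrow> moments (t f) = moments f"
  by (induction rule: Ggroup.induct) (simp_all add: moments_gen_n moments_gen_h moments_gen_r)

lemma norm2_sq_eq_sum_coeff:
  "norm2_sq f = of_real (\<Sum>j\<in>{0..int (degree f)}. (cmod (icoeff f j))\<^sup>2)"
proof -
  have "{0..<int (plen f)} = {0..int (degree f)}"
    unfolding plen_def by auto
  then show ?thesis
    unfolding norm2_sq_eq_acorr acorr_def of_real_sum
    by (intro sum.cong) (simp_all flip: of_real_power add: complex_norm_square)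
qed

lemma norm2_sq_eq_0_iff: "norm2_sq f = 0 \<longleftrightarrow> f = 0"
proof
  assume "norm2_sq f = 0"
  then have "\<forall>j\<in>{0..int (degree f)}. (cmod (icoeff f j))\<^sup>2 = 0"
    unfolding norm2_sq_eq_sum_coeff of_real_eq_0_iff by (subst (asm) sum_nonneg_eq_0_iff) auto
  then have "icoeff f (int (degree f)) = 0"
    by auto
  then show "f = 0"
    by (simp add: icoeff_def)
qed (simp add: norm2_sq_eq_sum_coeff icoeff_def)

lemma is_RS_like_seqE:
  assumes "is_RS_like_seq F"
  obtains \<sigma> where "\<sigma> \<in> {-1, 1}" and "F (Suc m) = rs_step \<sigma> (F m)"
  using assms unfolding is_RS_like_seq_def by blast

text \<open>With \<open>x\<^sub>m = A\<^sub>m / 4\<^sup>m\<close> and \<open>y\<^sub>m = B\<^sub>m / 4\<^sup>m\<close> the recurrences become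
  \<open>x' = x/2 + y\<close>, \<open>y' = x/2\<close>, a linear system with eigenvalues \<open>1\<close> and \<open>-1/2\<close>.\<close>
lemma tendsto_ADF_RS_like:
  assumes RS: "is_RS_like_seq F" and nz: "F 0 \<noteq> 0"
  shows "(\<lambda>m. ADF (F m))
           \<longlonglongrightarrow> 2 * Re (norm4_pow4 (F 0) + mixed_moment (F 0)) / (3 * (cmod (norm2_sq (F 0)))\<^sup>2) - 1"
proof -
  have step: "norm2_sq (F (Suc m)) = 2 * norm2_sq (F m)"
    "norm4_pow4 (F (Suc m)) = 2 * norm4_pow4 (F m) + 4 * mixed_moment (F m)"
    "mixed_moment (F (Suc m)) = 2 * norm4_pow4 (F m)" for m
  proof -
    obtain \<sigma> where "\<sigma> \<in> {-1, 1}" "F (Suc m) = rs_step \<sigma> (F m)"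
      by (rule is_RS_like_seqE[OF RS])
    then show "norm2_sq (F (Suc m)) = 2 * norm2_sq (F m)"
      "norm4_pow4 (F (Suc m)) = 2 * norm4_pow4 (F m) + 4 * mixed_moment (F m)"
      "mixed_moment (F (Suc m)) = 2 * norm4_pow4 (F m)"
      by (simp_all add: norm2_sq_rs_step norm4_pow4_rs_step mixed_moment_rs_step)
  qed
  define n where "n = cmod (norm2_sq (F 0))"
  have "n > 0"
    unfolding n_def using nz norm2_sq_eq_0_iff by simp
  have norm2: "cmod (norm2_sq (F m)) = 2 ^ m * n" for m
    by (induction m) (auto simp: n_def step norm_mult)
  define x where "x m = Re (norm4_pow4 (F m)) / 4 ^ m" for m
  define y where "y m = Re (mixed_moment (F m)) / 4 ^ m" for m
  define I where "I = x 0 + y 0"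
  define D where "D = x 0 - 2 * y 0"
  have closed: "x m = (2 * I + D * (-1/2) ^ m) / 3 \<and> y m = (I - D * (-1/2) ^ m) / 3" for m
  proof (induction m)
    case 0
    then show ?case unfolding I_def D_def by simp
  next
    case (Suc m)
    have "x (Suc m) = x m / 2 + y m" "y (Suc m) = x m / 2"
      unfolding x_def y_def by (simp_all add: step field_simps)
    with Suc show ?case by (simp add: field_simps)
  qed
  have ADF: "ADF (F m) = (2 * I + D * (-1/2) ^ m) / (3 * n\<^sup>2) - 1" for m
  proof -
    have "(2 ^ m * n)\<^sup>2 = 4 ^ m * n\<^sup>2"
      by (simp add: power_mult_distrib[symmetric] power2_eq_square mult_ac)
    then have "ADF (F m) = x m / n\<^sup>2 - 1"
      unfolding ADF_eq_moments norm2 x_def using \<open>n > 0\<close> by (simp add: field_simps)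
    then show ?thesis
      using closed[of m] by simp
  qed
  have "(\<lambda>m. (2 * I + D * (-1/2) ^ m) / (3 * n\<^sup>2) - 1) \<longlonglongrightarrow> (2 * I + D * 0) / (3 * n\<^sup>2) - 1"
    using \<open>n > 0\<close> by (intro tendsto_intros) auto
  then show ?thesis
    unfolding ADF I_def x_def y_def n_def by simp
qed

theorem corollary3p3:
  fixes l :: nat and f a :: "nat \<Rightarrow> complex poly" and t :: "complex poly \<Rightarrow> complex poly"
  assumes "f 0 \<in> Pset l"
    and "t \<in> Ggroup"
    and "a 0 = t (f 0)"
    and "is_RS_like_seq f"
    and "is_RS_like_seq a"
  shows "\<exists>L. (\<lambda>m. ADF (f m)) \<longlonglongrightarrow> L \<and> (\<lambda>m. ADF (a m)) \<longlonglongrightarrow> L"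
proof -
  have moments_a: "moments (a 0) = moments (f 0)"
    using moments_Ggroup[OF assms(2)] assms(3) by simp
  have "f 0 \<noteq> 0"
    using assms(1) unfolding Pset_def by auto
  moreover have "a 0 \<noteq> 0"
    using calculation moments_a norm2_sq_eq_0_iff[of "a 0"] norm2_sq_eq_0_iff[of "f 0"]
    by (simp add: moments_def)
  ultimately show ?thesis
    using tendsto_ADF_RS_like[OF assms(4)] tendsto_ADF_RS_like[OF assms(5)] moments_a
    by (auto simp: moments_def)
qed

end
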